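(* Let $\mathrm{std}_{surj}:WHA\to WHA_{surj}$ be the $\mathbf Z$-linear map sending a basis substitution $\binom{[y_1^{r_1},\dots,y_k^{r_k}]}{\sigma}$ of $WHA$ to $\binom{[y_1,\dots,y_k]}{\sigma}$ (the top word with its repeated letters removed, the bottom word unchanged). Then $\mathrm{std}_{surj}$ is a Hopf algebra morphism which is the identity on $WHA_{surj}$, hence a Hopf algebra retraction of the inclusion $WHA_{surj}\subset WHA$; moreover it maps $WHA_{inj}$ onto $WHA_{inj}\cap WHA_{surj}=\varphi(MPR)$ and restricts to a Hopf algebra retraction of the inclusion $\varphi(MPR)\subset WHA_{inj}$.
   Context: Words are finite sequences of letters; $*$ denotes concatenation; the support $\mathrm{supp}(\alpha)$ of a word is the set of letters occurring in it. The shuffle product $\alpha\times_{sh}\beta$ of words $\alpha=[c_1,\dots,c_p]$, $\beta=[d_1,\dots,d_q]$ is the sum, with multiplicities, over all ways of choosing $p$ of the $p+q$ positions, of the word obtained by placing the $c$'s in their original order in the chosen positions and the $d$'s in their original order in the remaining ones. A subword of $[a_1,\dots,a_m]$ is a word $[a_{i_1},\dots,a_{i_r}]$ with $i_1<\dots<i_r$. Definition of $dWHA$: Let $\mathcal X$ be a countably infinite alphabet. A substitution is a pair $p=\binom{\rho}{\sigma}$ of words over $\mathcal X$ with $\mathrm{supp}(\rho)=\mathrm{supp}(\sigma)$, considered up to simultaneously renaming the letters of both words by a bijection of $\mathcal X$. $dWHA$ is the free abelian group with basis all substitutions (including the empty substitution $\binom{[\,]}{[\,]}$), graded by $\deg(p)=\#\mathrm{supp}(\rho)$.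 Multiplication: for substitutions $p=\binom{\rho}{\sigma}$, $p'=\binom{\rho'}{\sigma'}$ written with $\mathrm{supp}(\rho)\cap\mathrm{supp}(\rho')=\emptyset$, $m(p\otimes p')=\binom{\rho*\rho'}{\sigma\times_{sh}\sigma'}$, meaning the sum of $\binom{\rho*\rho'}{\gamma}$ over the terms $\gamma$ (with multiplicity) of $\sigma\times_{sh}\sigma'$. The unit is the empty substitution. A good cut of a word $\sigma$ is a factorization $\sigma=\sigma_1*\sigma_2$ with $\mathrm{supp}(\sigma_1)\cap\mathrm{supp}(\sigma_2)=\emptyset$ (the two trivial cuts included). Comultiplication: $\mu(p)=\sum \binom{p^{-1}(\sigma_1)}{\sigma_1}\otimes\binom{p^{-1}(\sigma_2)}{\sigma_2}$, summed over all good cuts $\sigma=\sigma_1*\sigma_2$, where $p^{-1}(\sigma_i)$ is the subword of $\rho$ consisting of all occurrences in $\rho$ of letters of $\mathrm{supp}(\sigma_i)$. Counit: $\varepsilon$ is $1$ on the empty substitution and $0$ on all other substitutions. This is a Hopf algebra. $WHA$ is the sub Hopf algebra of $dWHA$ spanned by the substitutions $\binom{\rho}{\sigma}$ with $\rho=[y_1^{r_1},\dots,y_k^{r_k}]$, $y_1,\dots,y_k$ distinct letters, $r_i\ge1$, where $y^r$ denotes $r$ consecutive copies of $y$. $WHA_{inj}$ (resp. $WHA_{surj}$) is the sub Hopf algebra spanned by those basis substitutions of $WHA$ whose bottom word $\sigma$ (resp. top word $\rho$) has no repeated letter. $\varphi(MPR)$ denotes the sub Hopf algebra of $dWHA$ spanned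 by the substitutions in which neither $\rho$ nor $\sigma$ has a repeated letter (it is the image of the Hopf algebra of permutations $MPR$ under $[t_1,\dots,t_n]\mapsto\binom{[x_1,\dots,x_n]}{[x_{t_1},\dots,x_{t_n}]}$). *)

theory Defs
  imports Main
begin

text \<open>Letters are natural numbers (a countably infinite alphabet).  Substitutions are considered up to simultaneous
  bijective renaming; we pick the canonical representative in which the letters of
  rho are renamed 0,1,2,... in the order of their first occurrence in rho.\<close>

type_synonym sub = "nat list \<times> nat list"

definition rename_idx :: "nat list \<Rightarrow> nat \<Rightarrow> nat" where
  "rename_idx rho x = length (takeWhile (\<lambda>y. y \<noteq> x) (remdups rho))"

definition canon :: "sub \<Rightarrow> sub" where
  "canon p = (map (rename_idx (fst p)) (fst p), map (rename_idx (fst p)) (snd p))"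

definition subst :: "sub set" where
  "subst = {p. set (fst p) = set (snd p) \<and> canon p = p}"

definition empty_sub :: sub where
  "empty_sub = ([], [])"

text \<open>Tensors (elements of dWHA tensor dWHA): finitely supported integer
  functions on pairs of basis substitutions.\<close>

type_synonym elt = "sub \<Rightarrow> int"
type_synonym tens = "sub \<times> sub \<Rightarrow> int"

definition supp :: "('a \<Rightarrow> int) \<Rightarrow> 'a set" where
  "supp a = {p. a p \<noteq> 0}"

definition dWHA :: "elt set" where
  "dWHA = {a. finite (supp a) \<and> supp a \<subseteq> subst}"

definition span :: "sub set \<Rightarrow> elt set" where
  "span B = {a \<in> dWHA. supp a \<subseteq> B}"

definition bas :: "sub \<Rightarrow> elt" where
  "bas p = (\<lambda>q. if q = p then 1 else 0)"

definition lin :: "(sub \<Rightarrow> elt) \<Rightarrow> elt \<Rightarrow> elt" where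
  "lin f a = (\<lambda>q. \<Sum>p\<in>supp a. a p * f p q)"

text \<open>Shuffle product of words, as a list of words with multiplicities.\<close>
fun shuf :: "'a list \<Rightarrow> 'a list \<Rightarrow> 'a list list" where
  "shuf [] ys = [ys]"
| "shuf xs [] = [xs]"
| "shuf (x # xs) (y # ys) = map ((#) x) (shuf xs (y # ys)) @ map ((#) y) (shuf (x # xs) ys)"

text \<open>Product of two basis substitutions: the letters of the second are shifted so
  that the supports of the top words are disjoint.\<close>
definition mult_basis :: "sub \<Rightarrow> sub \<Rightarrow> elt" where
  "mult_basis p p' = (let k = card (set (fst p));
                          rho2 = map (\<lambda>x. x + k) (fst p');
                          sig2 = map (\<lambda>x. x + k) (snd p')
                      in (\<lambda>q. int (length (filter (\<lambda>g. canon (fst p @ rho2, g) = q)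
                                                     (shuf (snd p) sig2)))))"

definition mult :: "elt \<Rightarrow> elt \<Rightarrow> elt" where
  "mult a b = (\<lambda>q. \<Sum>p\<in>supp a. \<Sum>p'\<in>supp b. a p * b p' * mult_basis p p' q)"

definition unit :: elt where
  "unit = bas empty_sub"

definition good_cut :: "nat list \<Rightarrow> nat \<Rightarrow> bool" where
  "good_cut sigma i \<longleftrightarrow> i \<le> length sigma \<and> set (take i sigma) \<inter> set (drop i sigma) = {}"

text \<open>The factor of p corresponding to a subword sigma_i of sigma: the subword of rho
  of all occurrences of letters of supp(sigma_i), over sigma_i (made canonical).\<close>
definition restr :: "sub \<Rightarrow> nat list \<Rightarrow> sub" where
  "restr p s = canon (filter (\<lambda>x. x \<in> set s) (fst p), s)"

definition comult_basis :: "sub \<Rightarrow> tens" where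
  "comult_basis p = (\<lambda>(q1, q2). int (card {i. good_cut (snd p) i
        \<and> restr p (take i (snd p)) = q1 \<and> restr p (drop i (snd p)) = q2}))"

definition comult :: "elt \<Rightarrow> tens" where
  "comult a = (\<lambda>qq. \<Sum>p\<in>supp a. a p * comult_basis p qq)"

definition counit :: "elt \<Rightarrow> int" where
  "counit a = a empty_sub"

definition tensor_map :: "(sub \<Rightarrow> elt) \<Rightarrow> (sub \<Rightarrow> elt) \<Rightarrow> tens \<Rightarrow> tens" where
  "tensor_map f g t = (\<lambda>(q1, q2). \<Sum>pp\<in>supp t. t pp * f (fst pp) q1 * g (snd pp) q2)"

definition mult_tens :: "tens \<Rightarrow> elt" where
  "mult_tens t = (\<lambda>q. \<Sum>pp\<in>supp t. t pp * mult_basis (fst pp) (snd pp) q)"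

text \<open>Both sides are linear, so it suffices to check on basis elements.\<close>
definition is_antipode :: "(sub \<Rightarrow> elt) \<Rightarrow> bool" where
  "is_antipode s \<longleftrightarrow> (\<forall>p\<in>subst. s p \<in> dWHA
      \<and> mult_tens (tensor_map s bas (comult (bas p))) = (\<lambda>q. counit (bas p) * unit q)
      \<and> mult_tens (tensor_map bas s (comult (bas p))) = (\<lambda>q. counit (bas p) * unit q))"

definition WHA_basis :: "sub set" where
  "WHA_basis = {p \<in> subst. \<exists>ys rs. distinct ys \<and> length rs = length ys \<and> (\<forall>r\<in>set rs. 1 \<le> r)
                   \<and> fst p = concat (map2 (\<lambda>y r. replicate r y) ys rs)}"

definition WHA :: "elt set" where
  "WHA = span WHA_basis"

definition WHA_inj :: "elt set" where
  "WHA_inj = span {p \<in> WHA_basis. distinct (snd p)}"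

definition WHA_surj :: "elt set" where
  "WHA_surj = span {p \<in> WHA_basis. distinct (fst p)}"

definition phi_MPR :: "elt set" where
  "phi_MPR = span {p \<in> subst. distinct (fst p) \<and> distinct (snd p)}"

text \<open>On a basis substitution of WHA, [y1^r1,...,yk^rk] over sigma is sent to
  [y1,...,yk] over sigma; removing adjacent duplicates does exactly this.\<close>
definition std_surj_basis :: "sub \<Rightarrow> sub" where
  "std_surj_basis p = canon (remdups_adj (fst p), snd p)"

definition std_surj :: "elt \<Rightarrow> elt" where
  "std_surj = lin (\<lambda>p. bas (std_surj_basis p))"

end

theory Submission
  imports Defs
begin

text \<open>The product concatenates top words with disjoint supports, and collapsing
  commutes with such concatenations, so \<open>std_surj\<close> is multiplicative on all of dWHA.  The
  coproduct restricts the top word to the letters of a factor of the bottom word; collapsing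
  commutes with restriction as soon as every letter of the top word occurs in a single block,
  which is what membership in WHA means.  In both cases the two sides differ only by an injective
  renaming of letters, which canonical representatives do not see.  Compatibility with an
  antipode \<open>S\<close> then follows from the recursion \<open>m (S \<otimes> id) \<Delta> = \<eta> \<epsilon>\<close> by induction on the
  length of the bottom word.\<close>

section \<open>Canonical renaming\<close>

lemma length_takeWhile_neq_less: "x \<in> set L \<Longrightarrow> length (takeWhile (\<lambda>y. y \<noteq> x) L) < length L"
  by (induct L) auto

lemma rename_idx_less_card: "x \<in> set rho \<Longrightarrow> rename_idx rho x < card (set rho)"
  using length_takeWhile_neq_less[of x "remdups rho"]
  by (simp add: rename_idx_def length_remdups_card_conv)

lemma inj_on_rename_idx: "inj_on (rename_idx rho) (set rho)"
proof (rule inj_onI)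
  fix x y assume "x \<in> set rho" "y \<in> set rho" "rename_idx rho x = rename_idx rho y"
  then show "x = y"
    using nth_length_takeWhile[OF length_takeWhile_neq_less, of _ "remdups rho"]
    by (metis rename_idx_def set_remdups)
qed

lemma rename_idx_map:
  assumes "inj_on f (set rho)" "x \<in> set rho"
  shows "rename_idx (map f rho) (f x) = rename_idx rho x"
proof -
  have "remdups (map f rho) = map f (remdups rho)"
    using assms(1) by (induct rho) (auto simp: inj_on_def)
  moreover have "takeWhile (\<lambda>y. f y \<noteq> f x) (remdups rho) = takeWhile (\<lambda>y. y \<noteq> x) (remdups rho)"
    using assms by (intro takeWhile_cong) (auto simp: inj_on_def)
  ultimately show ?thesis
    by (simp add: rename_idx_def takeWhile_map comp_def)
qed

lemma canon_map_inj:
  assumes "inj_on f (set rho)" "set sig \<subseteq> set rho"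
  shows "canon (map f rho, map f sig) = canon (rho, sig)"
  using assms by (auto simp: canon_def rename_idx_map subsetD)

lemma canon_canon:
  assumes "set (snd p) \<subseteq> set (fst p)"
  shows "canon (canon p) = canon p"
proof -
  obtain rho sig where p: "p = (rho, sig)" by (cases p)
  have "canon (canon p) = canon (map (rename_idx rho) rho, map (rename_idx rho) sig)"
    by (simp add: p canon_def[of "(rho, sig)"])
  also have "\<dots> = canon p"
    using assms inj_on_rename_idx by (simp add: p canon_map_inj)
  finally show ?thesis .
qed

lemma canon_in_subst: "set (snd p) = set (fst p) \<Longrightarrow> canon p \<in> subst"
  using canon_canon[of p] by (auto simp: subst_def canon_def)

lemma subst_letter_less_card:
  assumes "p \<in> subst" "x \<in> set (fst p)"
  shows "x < card (set (fst p))"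
proof -
  have "fst p = map (rename_idx (fst p)) (fst p)"
    using assms(1) unfolding subst_def by (metis (mono_tags) canon_def fst_conv mem_Collect_eq)
  then have "x \<in> rename_idx (fst p) ` set (fst p)"
    using assms(2) by (metis list.set_map)
  then show ?thesis
    using rename_idx_less_card by auto
qed

section \<open>Block words\<close>

inductive block_word :: "nat list \<Rightarrow> bool" where
  block_word_Nil: "block_word []"
| block_word_replicate: "block_word A \<Longrightarrow> y \<notin> set A \<Longrightarrow> 0 < r \<Longrightarrow> block_word (replicate r y @ A)"

lemma set_concat_map2_replicate:
  "length rs = length ys \<Longrightarrow> \<forall>r\<in>set rs. 0 < r \<Longrightarrow>
    set (concat (map2 (\<lambda>y r. replicate r y) ys rs)) = set ys"
proof (induct ys arbitrary: rs)
  case (Cons y ys)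
  then show ?case by (cases rs) auto
qed simp

lemma block_word_iff_blocks:
  "block_word A \<longleftrightarrow> (\<exists>ys rs. distinct ys \<and> length rs = length ys \<and> (\<forall>r\<in>set rs. 1 \<le> r)
     \<and> A = concat (map2 (\<lambda>y r. replicate r y) ys rs))"
proof
  assume "block_word A"
  then show "\<exists>ys rs. distinct ys \<and> length rs = length ys \<and> (\<forall>r\<in>set rs. 1 \<le> r)
     \<and> A = concat (map2 (\<lambda>y r. replicate r y) ys rs)"
  proof (induct rule: block_word.induct)
    case block_word_Nil
    show ?case by (intro exI[of _ "[]"]) simp
  next
    case (block_word_replicate A y r)
    then obtain ys rs where blocks: "distinct ys" "length rs = length ys" "\<forall>r\<in>set rs. 1 \<le> r"
      "A = concat (map2 (\<lambda>y r. replicate r y) ys rs)" by blast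
    then have "set A = set ys"
      using set_concat_map2_replicate[of rs ys] by (simp add: Suc_le_eq)
    then show ?case
      using blocks block_word_replicate.hyps
      by (intro exI[of _ "y # ys"] exI[of _ "r # rs"]) auto
  qed
next
  assume "\<exists>ys rs. distinct ys \<and> length rs = length ys \<and> (\<forall>r\<in>set rs. 1 \<le> r)
     \<and> A = concat (map2 (\<lambda>y r. replicate r y) ys rs)"
  then obtain ys rs where "distinct ys" "length rs = length ys" "\<forall>r\<in>set rs. 0 < r"
     "A = concat (map2 (\<lambda>y r. replicate r y) ys rs)" by (auto simp: Suc_le_eq)
  then show "block_word A"
  proof (induct ys arbitrary: rs A)
    case Nil
    then show ?case by (simp add: block_word_Nil)
  next
    case (Cons y ys)
    obtain r rs' where "rs = r # rs'"
      using Cons.prems(2) by (cases rs) auto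
    with Cons show ?case
      using set_concat_map2_replicate[of rs' ys] by (auto intro!: block_word_replicate)
  qed
qed

lemma WHA_basis_block_word: "WHA_basis = {p \<in> subst. block_word (fst p)}"
  by (auto simp: WHA_basis_def block_word_iff_blocks)

lemma block_word_if_distinct: "distinct A \<Longrightarrow> block_word A"
  using block_word_replicate[of _ _ 1] by (induct A) (auto intro: block_word_Nil)

lemma block_word_filter: "block_word A \<Longrightarrow> block_word (filter P A)"
proof (induct rule: block_word.induct)
  case (block_word_replicate A y r)
  then show ?case
    by (cases "P y") (auto intro: block_word.block_word_replicate)
qed (simp add: block_word_Nil)

lemma block_word_map: "block_word A \<Longrightarrow> inj_on f (set A) \<Longrightarrow> block_word (map f A)"
proof (induct rule: block_word.induct)
  case (block_word_replicate A y r)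
  then have "block_word (replicate r (f y) @ map f A)"
    by (intro block_word.block_word_replicate) (auto simp: inj_on_def)
  then show ?case by simp
qed (simp add: block_word_Nil)

lemma remdups_adj_replicate_append:
  "0 < r \<Longrightarrow> y \<notin> set A \<Longrightarrow> remdups_adj (replicate r y @ A) = y # remdups_adj A"
  by (cases A) (auto simp: remdups_adj_append' remdups_adj_replicate)

lemma distinct_remdups_adj_block_word: "block_word A \<Longrightarrow> distinct (remdups_adj A)"
  by (induct rule: block_word.induct) (simp_all add: remdups_adj_replicate_append)

lemma remdups_adj_filter_block_word:
  "block_word A \<Longrightarrow> remdups_adj (filter P A) = filter P (remdups_adj A)"
  by (induct rule: block_word.induct) (simp_all add: remdups_adj_replicate_append)

lemma fst_std_surj_basis:
    "fst (std_surj_basis p) = map (rename_idx (remdups_adj (fst p))) (remdups_adj (fst p))"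
  and snd_std_surj_basis:
    "snd (std_surj_basis p) = map (rename_idx (remdups_adj (fst p))) (snd p)"
  by (simp_all add: std_surj_basis_def canon_def)

lemma remdups_adj_map_inj_on:
  "inj_on f (set xs) \<Longrightarrow> remdups_adj (map f xs) = map f (remdups_adj xs)"
  by (induct xs rule: remdups_adj.induct) (auto simp: inj_on_def)

lemma std_surj_basis_canon:
  assumes "set sig \<subseteq> set rho"
  shows "std_surj_basis (canon (rho, sig)) = canon (remdups_adj rho, sig)"
proof -
  let ?f = "rename_idx rho"
  have "std_surj_basis (canon (rho, sig)) = canon (map ?f (remdups_adj rho), map ?f sig)"
    using inj_on_rename_idx[of rho]
    by (simp add: std_surj_basis_def canon_def[of "(rho, sig)"] remdups_adj_map_inj_on)
  also have "\<dots> = canon (remdups_adj rho, sig)"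
    using assms inj_on_rename_idx[of rho] by (intro canon_map_inj) auto
  finally show ?thesis .
qed

lemma std_surj_basis_in_subst: "p \<in> subst \<Longrightarrow> std_surj_basis p \<in> subst"
  unfolding std_surj_basis_def by (rule canon_in_subst) (simp add: subst_def)

lemma std_surj_basis_id: "p \<in> subst \<Longrightarrow> distinct (fst p) \<Longrightarrow> std_surj_basis p = p"
  by (simp add: std_surj_basis_def remdups_adj_distinct subst_def)

lemma distinct_fst_std_surj_basis: "block_word (fst p) \<Longrightarrow> distinct (fst (std_surj_basis p))"
  using inj_on_rename_idx[of "remdups_adj (fst p)"]
  by (simp add: fst_std_surj_basis distinct_map distinct_remdups_adj_block_word)

lemma distinct_snd_std_surj_basis:
  "p \<in> subst \<Longrightarrow> distinct (snd p) \<Longrightarrow> distinct (snd (std_surj_basis p))"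
  using inj_on_rename_idx[of "remdups_adj (fst p)"]
  by (simp add: snd_std_surj_basis distinct_map subst_def)

lemma card_fst_std_surj_basis: "card (set (fst (std_surj_basis p))) = card (set (fst p))"
  using inj_on_rename_idx[of "remdups_adj (fst p)"]
  by (simp add: fst_std_surj_basis card_image)

lemma std_surj_basis_empty_sub [simp]: "std_surj_basis empty_sub = empty_sub"
  by (simp add: std_surj_basis_def empty_sub_def canon_def)

lemma std_surj_basis_eq_empty_sub_iff:
  assumes "p \<in> subst"
  shows "std_surj_basis p = empty_sub \<longleftrightarrow> p = empty_sub"
proof
  assume "std_surj_basis p = empty_sub"
  then have "snd p = []"
    using snd_std_surj_basis[of p] by (simp add: empty_sub_def)
  with assms show "p = empty_sub"
    by (simp add: subst_def empty_sub_def prod_eq_iff)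
qed simp

lemma sum_supp_superset:
  assumes "finite S" "supp a \<subseteq> S"
  shows "(\<Sum>p\<in>supp a. a p * F p) = (\<Sum>p\<in>S. a p * F p)"
  using assms by (intro sum.mono_neutral_left) (auto simp: supp_def)

lemma supp_sum_subset: "supp (\<lambda>u. \<Sum>i\<in>I. g i u) \<subseteq> (\<Union>i\<in>I. supp (g i))"
  by (auto simp: supp_def dest: sum.not_neutral_contains_not_neutral)

lemma sum_supp_linear_combination:
  assumes "finite I" "\<And>i. i \<in> I \<Longrightarrow> finite (supp (g i))"
  shows "(\<Sum>u\<in>supp (\<lambda>u. \<Sum>i\<in>I. c i * g i u). (\<Sum>i\<in>I. c i * g i u) * H u)
       = (\<Sum>i\<in>I. c i * (\<Sum>u\<in>supp (g i). g i u * H u))"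
proof -
  define U where "U = (\<Union>i\<in>I. supp (g i))"
  have U: "finite U" using assms by (simp add: U_def)
  have "supp (\<lambda>u. \<Sum>i\<in>I. c i * g i u) \<subseteq> U"
    using supp_sum_subset[of "\<lambda>i u. c i * g i u" I] by (auto simp: U_def supp_def)
  then have "(\<Sum>u\<in>supp (\<lambda>u. \<Sum>i\<in>I. c i * g i u). (\<Sum>i\<in>I. c i * g i u) * H u)
      = (\<Sum>u\<in>U. (\<Sum>i\<in>I. c i * g i u) * H u)"
    using sum_supp_superset[OF U] by simp
  also have "\<dots> = (\<Sum>i\<in>I. c i * (\<Sum>u\<in>U. g i u * H u))"
    by (simp add: sum_distrib_right sum_distrib_left mult.assoc sum.swap[of _ U])
  also have "\<dots> = (\<Sum>i\<in>I. c i * (\<Sum>u\<in>supp (g i). g i u * H u))"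
  proof (rule sum.cong[OF refl])
    fix i assume "i \<in> I"
    then have "supp (g i) \<subseteq> U" by (auto simp: U_def)
    then show "c i * (\<Sum>u\<in>U. g i u * H u) = c i * (\<Sum>u\<in>supp (g i). g i u * H u)"
      using sum_supp_superset[OF U, of "g i" H] by simp
  qed
  finally show ?thesis .
qed

lemma supp_bas [simp]: "supp (bas p) = {p}"
  by (auto simp: supp_def bas_def)

lemma bas_self [simp]: "bas p p = 1"
  by (simp add: bas_def)

lemma lin_bas_apply: "lin (\<lambda>p. bas (h p)) a r = (\<Sum>p\<in>supp a. a p * bas (h p) r)"
  by (simp add: lin_def)

lemma lin_bas_bas: "lin (\<lambda>p. bas (h p)) (bas q) = bas (h q)"
  by (simp add: lin_def fun_eq_iff)

lemma lin_bas_id: "finite (supp a) \<Longrightarrow> lin bas a = a"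
proof
  fix q
  assume "finite (supp a)"
  have "lin bas a q = (\<Sum>p\<in>supp a. if q = p then a p else 0)"
    by (auto simp: lin_def bas_def intro: sum.cong)
  then show "lin bas a q = a q"
    using \<open>finite (supp a)\<close> by (simp add: supp_def)
qed

lemma sum_supp_lin_bas:
  assumes "finite (supp a)"
  shows "(\<Sum>u\<in>supp (lin (\<lambda>p. bas (h p)) a). lin (\<lambda>p. bas (h p)) a u * H u)
       = (\<Sum>p\<in>supp a. a p * H (h p))"
  unfolding lin_def using sum_supp_linear_combination[OF assms, of "\<lambda>p. bas (h p)" a H] by simp

lemma supp_lin_bas: "supp (lin (\<lambda>p. bas (h p)) a) \<subseteq> h ` supp a"
  using supp_sum_subset[of "\<lambda>p u. a p * bas (h p) u" "supp a"]
  by (auto simp: lin_def supp_def bas_def split: if_splits)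

lemma lin_bas_sum:
  assumes "finite I" "\<And>i. i \<in> I \<Longrightarrow> finite (supp (g i))"
  shows "lin (\<lambda>p. bas (h p)) (\<lambda>q. \<Sum>i\<in>I. g i q) r = (\<Sum>i\<in>I. lin (\<lambda>p. bas (h p)) (g i) r)"
  using sum_supp_linear_combination[OF assms, where c = "\<lambda>_. 1" and H = "\<lambda>u. bas (h u) r"]
  by (simp add: lin_def)

lemma sum_multiplicities:
  assumes "finite S" "F ` set L \<subseteq> S"
  shows "(\<Sum>q\<in>S. int (length (filter (\<lambda>g. F g = q) L)) * f q) = (\<Sum>g\<leftarrow>L. f (F g))"
  using assms(2)
proof (induct L)
  case (Cons x L)
  have "(\<Sum>q\<in>S. int (length (filter (\<lambda>g. F g = q) (x # L))) * f q)
      = (\<Sum>q\<in>S. (if F x = q then f q else 0) + int (length (filter (\<lambda>g. F g = q) L)) * f q)"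
    by (intro sum.cong) (auto simp: algebra_simps)
  also have "\<dots> = f (F x) + (\<Sum>q\<in>S. int (length (filter (\<lambda>g. F g = q) L)) * f q)"
    using Cons.prems assms(1) by (simp add: sum.distrib)
  finally show ?case
    using Cons by simp
qed simp

lemma supp_multiplicities: "supp (\<lambda>q. int (length (filter (\<lambda>g. F g = q) L))) \<subseteq> F ` set L"
  by (auto simp: supp_def filter_empty_conv intro: sym)

lemma lin_bas_multiplicities:
  "lin (\<lambda>q. bas (h q)) (\<lambda>q. int (length (filter (\<lambda>g. F g = q) L)))
     = (\<lambda>r. int (length (filter (\<lambda>g. h (F g) = r) L)))"
proof
  fix r
  have "lin (\<lambda>q. bas (h q)) (\<lambda>q. int (length (filter (\<lambda>g. F g = q) L))) r
      = (\<Sum>g\<leftarrow>L. bas (h (F g)) r)"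
    using sum_supp_superset[of "F ` set L", OF _ supp_multiplicities]
      sum_multiplicities[of _ F L "\<lambda>q. bas (h q) r"]
    by (simp add: lin_def)
  also have "\<dots> = int (length (filter (\<lambda>g. h (F g) = r) L))"
    by (induct L) (auto simp: bas_def)
  finally show "lin (\<lambda>q. bas (h q)) (\<lambda>q. int (length (filter (\<lambda>g. F g = q) L))) r
      = int (length (filter (\<lambda>g. h (F g) = r) L))" .
qed

lemma std_surj_apply: "std_surj a r = (\<Sum>p\<in>supp a. a p * bas (std_surj_basis p) r)"
  by (simp add: std_surj_def lin_bas_apply)

lemma supp_std_surj: "supp (std_surj a) \<subseteq> std_surj_basis ` supp a"
  unfolding std_surj_def by (rule supp_lin_bas)

lemma std_surj_in_dWHA: "a \<in> dWHA \<Longrightarrow> std_surj a \<in> dWHA"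
proof -
  assume "a \<in> dWHA"
  then have "finite (std_surj_basis ` supp a)" "std_surj_basis ` supp a \<subseteq> subst"
    using std_surj_basis_in_subst by (auto simp: dWHA_def)
  then show ?thesis
    using supp_std_surj[of a] by (auto simp: dWHA_def intro: finite_subset)
qed

section \<open>Multiplicativity\<close>

lemma set_shuf: "g \<in> set (shuf xs ys) \<Longrightarrow> set g = set xs \<union> set ys"
  by (induct xs ys arbitrary: g rule: shuf.induct) auto

lemma shuf_map: "shuf (map f xs) (map f ys) = map (map f) (shuf xs ys)"
  by (induct xs ys rule: shuf.induct) auto

lemma inj_on_piecewise_shift:
  fixes k :: nat
  assumes "inj_on f A" "inj_on g B" "\<And>x. x \<in> A \<Longrightarrow> x < k \<and> f x < k"
  shows "inj_on (\<lambda>x. if x < k then f x else g (x - k) + k) (A \<union> (\<lambda>x. x + k) ` B)"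
  (is "inj_on ?H _")
proof (subst inj_on_Un, intro conjI)
  show "inj_on ?H A"
    using assms(1,3) by (simp add: inj_on_def)
  show "inj_on ?H ((\<lambda>x. x + k) ` B)"
    using assms(2) by (simp add: inj_on_def)
  have "?H ` A \<subseteq> {..<k}"
    using assms(3) by auto
  moreover have "?H ` ((\<lambda>x. x + k) ` B) \<subseteq> {k..}"
    by auto
  ultimately show "?H ` (A - (\<lambda>x. x + k) ` B) \<inter> ?H ` ((\<lambda>x. x + k) ` B - A) = {}"
    by fastforce
qed

lemma remdups_adj_append_disjoint:
  "set xs \<inter> set ys = {} \<Longrightarrow> remdups_adj (xs @ ys) = remdups_adj xs @ remdups_adj ys"
  by (cases "xs = [] \<or> ys = []") (auto intro!: remdups_adj_append' dest: last_in_set hd_in_set)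

lemma std_surj_mult_basis_eq_count:
  assumes p: "p \<in> subst" and p': "p' \<in> subst"
  defines "k \<equiv> card (set (fst p))"
  shows "std_surj (mult_basis p p') = (\<lambda>r. int (length (filter
      (\<lambda>g. canon (remdups_adj (fst p) @ map (\<lambda>x. x + k) (remdups_adj (fst p')), g) = r)
      (shuf (snd p) (map (\<lambda>x. x + k) (snd p'))))))"
proof -
  obtain rho sig rho' sig' where pp: "p = (rho, sig)" and pp': "p' = (rho', sig')"
    by (cases p, cases p')
  define W where "W = remdups_adj rho @ map (\<lambda>x. x + k) (remdups_adj rho')"
  have "set rho \<inter> set (map (\<lambda>x. x + k) rho') = {}"
    using subst_letter_less_card[OF p] by (auto simp: pp k_def)
  then have remdups_adj_W: "remdups_adj (rho @ map (\<lambda>x. x + k) rho') = W"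
    by (simp add: W_def remdups_adj_append_disjoint remdups_adj_map_injective inj_def)
  have "std_surj_basis (canon (rho @ map (\<lambda>x. x + k) rho', g)) = canon (W, g)"
    if "g \<in> set (shuf sig (map (\<lambda>x. x + k) sig'))" for g
    using set_shuf[OF that] p p' remdups_adj_W
    by (subst std_surj_basis_canon) (auto simp: pp pp' subst_def)
  then show ?thesis
    by (simp add: std_surj_def mult_basis_def pp pp' Let_def lin_bas_multiplicities k_def W_def
        cong: filter_cong)
qed

text \<open>The single injective renaming \<open>H\<close> of the letters of both factors carries the collapsed
  top word of the product to that of the product of the collapsed factors, and the shuffles of
  the bottom words along.\<close>
lemma mult_basis_std_surj_basis_eq_count:
  assumes p: "p \<in> subst" and p': "p' \<in> subst"
  defines "k \<equiv> card (set (fst p))"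
  shows "mult_basis (std_surj_basis p) (std_surj_basis p') = (\<lambda>r. int (length (filter
      (\<lambda>g. canon (remdups_adj (fst p) @ map (\<lambda>x. x + k) (remdups_adj (fst p')), g) = r)
      (shuf (snd p) (map (\<lambda>x. x + k) (snd p'))))))"
proof -
  obtain rho sig rho' sig' where pp: "p = (rho, sig)" and pp': "p' = (rho', sig')"
    by (cases p, cases p')
  define R where "R = remdups_adj rho"
  define R' where "R' = remdups_adj rho'"
  define W where "W = R @ map (\<lambda>x. x + k) R'"
  define L where "L = shuf sig (map (\<lambda>x. x + k) sig')"
  define H where "H x = (if x < k then rename_idx R x else rename_idx R' (x - k) + k)" for x
  have letters: "set sig = set R" "set sig' = set R'"
    using p p' by (simp_all add: pp pp' R_def R'_def subst_def)
  have below: "x \<in> set R \<Longrightarrow> x < k" for x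
    using subst_letter_less_card[OF p] by (simp add: pp k_def R_def)
  have "card (set R) = k"
    by (simp add: R_def k_def pp)
  then have inj: "inj_on H (set W)"
    unfolding H_def W_def set_append set_map
    using below rename_idx_less_card[of _ R]
    by (intro inj_on_piecewise_shift inj_on_rename_idx) auto
  have set_L: "set g \<subseteq> set W" if "g \<in> set L" for g
    using that set_shuf[of g] letters by (auto simp: L_def W_def)
  have H_R: "map H R = map (rename_idx R) R" "map H sig = map (rename_idx R) sig"
    using below letters by (auto simp: H_def)
  have H_shift: "H (x + k) = rename_idx R' x + k" for x
    by (simp add: H_def)
  have "fst (std_surj_basis p) @ map (\<lambda>x. x + k) (fst (std_surj_basis p')) = map H W"
    "shuf (snd (std_surj_basis p)) (map (\<lambda>x. x + k) (snd (std_surj_basis p'))) = map (map H) L"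
    by (simp_all add: fst_std_surj_basis snd_std_surj_basis pp pp' W_def L_def H_R H_shift
        comp_def shuf_map[symmetric] flip: R_def R'_def)
  moreover have "card (set (fst (std_surj_basis p))) = k"
    by (simp add: card_fst_std_surj_basis k_def)
  ultimately have "mult_basis (std_surj_basis p) (std_surj_basis p')
      = (\<lambda>r. int (length (filter (\<lambda>g. canon (map H W, map H g) = r) L)))"
    by (simp add: mult_basis_def Let_def filter_map comp_def)
  also have "\<dots> = (\<lambda>r. int (length (filter (\<lambda>g. canon (W, g) = r) L)))"
    using inj set_L by (auto simp: canon_map_inj cong: filter_cong)
  finally show ?thesis
    by (simp add: pp pp' W_def L_def R_def R'_def)
qed

lemma std_surj_mult_basis:
  "p \<in> subst \<Longrightarrow> p' \<in> subst
    \<Longrightarrow> std_surj (mult_basis p p') = mult_basis (std_surj_basis p) (std_surj_basis p')"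
  by (simp add: std_surj_mult_basis_eq_count mult_basis_std_surj_basis_eq_count)

lemma finite_supp_mult_basis: "finite (supp (mult_basis p p'))"
  unfolding mult_basis_def Let_def by (rule finite_subset[OF supp_multiplicities]) simp

lemma mult_eq_sum_pairs:
  "mult a b = (\<lambda>q. \<Sum>pp\<in>supp a \<times> supp b. (a (fst pp) * b (snd pp)) * mult_basis (fst pp) (snd pp) q)"
  by (simp add: mult_def sum.cartesian_product case_prod_unfold)

lemma finite_supp_mult: "finite (supp a) \<Longrightarrow> finite (supp b) \<Longrightarrow> finite (supp (mult a b))"
  unfolding mult_eq_sum_pairs
  by (rule finite_subset[OF supp_sum_subset])
    (auto intro!: finite_UN_I intro: finite_subset[OF _ finite_supp_mult_basis] simp: supp_def)

lemma lin_bas_mult: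
  assumes a: "finite (supp a)" and b: "finite (supp b)"
    and hom: "\<And>p p'. p \<in> supp a \<Longrightarrow> p' \<in> supp b \<Longrightarrow>
      lin (\<lambda>q. bas (h q)) (mult_basis p p') = mult_basis (h p) (h p')"
  shows "lin (\<lambda>q. bas (h q)) (mult a b) = mult (lin (\<lambda>q. bas (h q)) a) (lin (\<lambda>q. bas (h q)) b)"
proof
  fix r
  have "lin (\<lambda>q. bas (h q)) (mult a b) r
      = (\<Sum>pp\<in>supp a \<times> supp b. (a (fst pp) * b (snd pp)) *
          lin (\<lambda>q. bas (h q)) (mult_basis (fst pp) (snd pp)) r)"
    unfolding mult_eq_sum_pairs[of a b] lin_def
    by (rule sum_supp_linear_combination) (simp_all add: a b finite_supp_mult_basis)
  also have "\<dots> = (\<Sum>pp\<in>supp a \<times> supp b. (a (fst pp) * b (snd pp)) *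
          mult_basis (h (fst pp)) (h (snd pp)) r)"
    by (intro sum.cong) (auto simp: hom)
  also have "\<dots> = (\<Sum>p\<in>supp a. a p * (\<Sum>p'\<in>supp b. b p' * mult_basis (h p) (h p') r))"
    by (simp add: sum.cartesian_product case_prod_unfold sum_distrib_left mult.assoc)
  also have "\<dots> = (\<Sum>u\<in>supp (lin (\<lambda>q. bas (h q)) a). lin (\<lambda>q. bas (h q)) a u *
      (\<Sum>u'\<in>supp (lin (\<lambda>q. bas (h q)) b). lin (\<lambda>q. bas (h q)) b u' * mult_basis u u' r))"
    by (simp add: sum_supp_lin_bas a b)
  also have "\<dots> = mult (lin (\<lambda>q. bas (h q)) a) (lin (\<lambda>q. bas (h q)) b) r"
    by (simp add: mult_def sum_distrib_left mult.assoc)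
  finally show "lin (\<lambda>q. bas (h q)) (mult a b) r
      = mult (lin (\<lambda>q. bas (h q)) a) (lin (\<lambda>q. bas (h q)) b) r" .
qed

lemma std_surj_mult:
  assumes "a \<in> dWHA" "b \<in> dWHA"
  shows "std_surj (mult a b) = mult (std_surj a) (std_surj b)"
proof -
  have "finite (supp a)" "finite (supp b)" "supp a \<subseteq> subst" "supp b \<subseteq> subst"
    using assms by (simp_all add: dWHA_def)
  then show ?thesis
    unfolding std_surj_def using std_surj_mult_basis[unfolded std_surj_def]
    by (intro lin_bas_mult) blast+
qed

section \<open>Comultiplicativity\<close>

definition good_cuts :: "sub \<Rightarrow> nat set" where
  "good_cuts p = {i. good_cut (snd p) i}"

definition cut_factors :: "sub \<Rightarrow> nat \<Rightarrow> sub \<times> sub" where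
  "cut_factors p i = (restr p (take i (snd p)), restr p (drop i (snd p)))"

lemma finite_good_cuts: "finite (good_cuts p)"
  by (rule finite_subset[of _ "{..length (snd p)}"]) (auto simp: good_cuts_def good_cut_def)

lemma comult_basis_eq_card:
  "comult_basis p qq = int (card {i \<in> good_cuts p. cut_factors p i = qq})"
  by (cases qq) (simp add: comult_basis_def good_cuts_def cut_factors_def)

lemma supp_comult_basis: "supp (comult_basis p) \<subseteq> cut_factors p ` good_cuts p"
proof
  fix qq assume "qq \<in> supp (comult_basis p)"
  then have "{i \<in> good_cuts p. cut_factors p i = qq} \<noteq> {}"
    by (auto simp: supp_def comult_basis_eq_card card_gt_0_iff)
  then show "qq \<in> cut_factors p ` good_cuts p" by blast
qed

lemma finite_supp_comult_basis: "finite (supp (comult_basis p))"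
  by (rule finite_subset[OF supp_comult_basis]) (simp add: finite_good_cuts)

lemma sum_comult_basis:
  "(\<Sum>qq\<in>supp (comult_basis p). comult_basis p qq * f qq) = (\<Sum>i\<in>good_cuts p. f (cut_factors p i))"
proof -
  have "(\<Sum>qq\<in>supp (comult_basis p). comult_basis p qq * f qq)
      = (\<Sum>qq\<in>cut_factors p ` good_cuts p. comult_basis p qq * f qq)"
    using supp_comult_basis by (intro sum_supp_superset) (simp_all add: finite_good_cuts)
  also have "\<dots> = (\<Sum>qq\<in>cut_factors p ` good_cuts p.
      \<Sum>i\<in>{i \<in> good_cuts p. cut_factors p i = qq}. f (cut_factors p i))"
    by (intro sum.cong) (simp_all add: comult_basis_eq_card)
  also have "\<dots> = (\<Sum>i\<in>good_cuts p. f (cut_factors p i))"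
    by (rule sum.image_gen[OF finite_good_cuts, symmetric])
  finally show ?thesis .
qed

lemma good_cut_map_inj:
  assumes "inj_on f (set s)"
  shows "good_cut (map f s) i \<longleftrightarrow> good_cut s i"
proof -
  have "f ` set (take i s) \<inter> f ` set (drop i s) = f ` (set (take i s) \<inter> set (drop i s))"
    using assms by (intro inj_on_image_Int[symmetric]) (auto dest: in_set_takeD in_set_dropD)
  then show ?thesis
    by (simp only: good_cut_def length_map take_map drop_map set_map image_is_empty)
qed

lemma good_cuts_std_surj_basis: "p \<in> subst \<Longrightarrow> good_cuts (std_surj_basis p) = good_cuts p"
  using inj_on_rename_idx[of "remdups_adj (fst p)"]
  by (auto simp: good_cuts_def snd_std_surj_basis subst_def good_cut_map_inj)

lemma restr_std_surj_basis:
  assumes p: "p \<in> subst" "block_word (fst p)" and s: "set s \<subseteq> set (snd p)"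
  shows "restr (std_surj_basis p) (map (rename_idx (remdups_adj (fst p))) s)
       = std_surj_basis (restr p s)"
proof -
  define R where "R = remdups_adj (fst p)"
  define f where "f = rename_idx R"
  have inj: "inj_on f (set R)"
    unfolding f_def by (rule inj_on_rename_idx)
  have s_R: "set s \<subseteq> set R"
    using p s by (simp add: R_def subst_def)
  have "filter (\<lambda>x. f x \<in> f ` set s) R = filter (\<lambda>x. x \<in> set s) R"
    using inj s_R by (intro filter_cong) (simp_all add: inj_on_image_mem_iff)
  then have "filter (\<lambda>x. x \<in> f ` set s) (map f R) = map f (filter (\<lambda>x. x \<in> set s) R)"
    by (simp add: filter_map comp_def)
  then have "restr (std_surj_basis p) (map f s) = canon (map f (filter (\<lambda>x. x \<in> set s) R), map f s)"
    by (simp add: restr_def fst_std_surj_basis R_def f_def)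
  also have "\<dots> = canon (filter (\<lambda>x. x \<in> set s) R, s)"
    using inj s_R by (intro canon_map_inj) (auto intro: inj_on_subset)
  also have "\<dots> = std_surj_basis (restr p s)"
  proof -
    have "std_surj_basis (restr p s) = canon (remdups_adj (filter (\<lambda>x. x \<in> set s) (fst p)), s)"
      unfolding restr_def using s_R by (intro std_surj_basis_canon) (auto simp: R_def)
    then show ?thesis
      using p(2) by (simp add: remdups_adj_filter_block_word R_def)
  qed
  finally show ?thesis
    by (simp add: f_def R_def)
qed

lemma cut_factors_std_surj_basis:
  assumes "p \<in> subst" "block_word (fst p)"
  shows "cut_factors (std_surj_basis p) i
       = (std_surj_basis (fst (cut_factors p i)), std_surj_basis (snd (cut_factors p i)))"
  unfolding cut_factors_def snd_std_surj_basis take_map[symmetric] drop_map[symmetric]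
  using assms
  by (simp add: restr_std_surj_basis[symmetric] take_map drop_map set_take_subset set_drop_subset)

lemma comult_basis_std_surj_basis:
  assumes "p \<in> subst" "block_word (fst p)"
  shows "comult_basis (std_surj_basis p)
       = tensor_map (\<lambda>q. bas (std_surj_basis q)) (\<lambda>q. bas (std_surj_basis q)) (comult_basis p)"
proof
  fix qq :: "sub \<times> sub"
  obtain q1 q2 where qq: "qq = (q1, q2)" by (cases qq)
  have "tensor_map (\<lambda>q. bas (std_surj_basis q)) (\<lambda>q. bas (std_surj_basis q)) (comult_basis p) qq
      = (\<Sum>i\<in>good_cuts p. bas (std_surj_basis (fst (cut_factors p i))) q1
                            * bas (std_surj_basis (snd (cut_factors p i))) q2)"
    by (simp add: tensor_map_def qq mult.assoc sum_comult_basis)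
  also have "\<dots> = (\<Sum>i\<in>good_cuts p. if cut_factors (std_surj_basis p) i = qq then 1 else 0)"
    using assms by (intro sum.cong) (auto simp: bas_def cut_factors_std_surj_basis qq)
  also have "\<dots> = comult_basis (std_surj_basis p) qq"
    using assms finite_good_cuts
    by (simp add: comult_basis_eq_card good_cuts_std_surj_basis sum.If_cases Int_def)
  finally show "comult_basis (std_surj_basis p) qq = tensor_map (\<lambda>q. bas (std_surj_basis q))
      (\<lambda>q. bas (std_surj_basis q)) (comult_basis p) qq" ..
qed

lemma tensor_map_comult:
  assumes "finite (supp a)"
  shows "tensor_map f g (comult a) = (\<lambda>qq. \<Sum>p\<in>supp a. a p * tensor_map f g (comult_basis p) qq)"
proof
  fix qq :: "sub \<times> sub"
  show "tensor_map f g (comult a) qq = (\<Sum>p\<in>supp a. a p * tensor_map f g (comult_basis p) qq)"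
    using sum_supp_linear_combination[OF assms finite_supp_comult_basis,
        where c = a and H = "\<lambda>pp. f (fst pp) (fst qq) * g (snd pp) (snd qq)"]
    by (cases qq) (simp add: tensor_map_def comult_def mult.assoc)
qed

lemma lin_bas_comult:
  assumes "finite (supp a)"
    and "\<And>p. p \<in> supp a \<Longrightarrow>
      comult_basis (h p) = tensor_map (\<lambda>q. bas (h q)) (\<lambda>q. bas (h q)) (comult_basis p)"
  shows "comult (lin (\<lambda>q. bas (h q)) a) = tensor_map (\<lambda>q. bas (h q)) (\<lambda>q. bas (h q)) (comult a)"
proof -
  have "comult (lin (\<lambda>q. bas (h q)) a) = (\<lambda>qq. \<Sum>p\<in>supp a. a p * comult_basis (h p) qq)"
    using assms(1) by (simp add: comult_def sum_supp_lin_bas)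
  also have "\<dots> = (\<lambda>qq. \<Sum>p\<in>supp a. a p *
      tensor_map (\<lambda>q. bas (h q)) (\<lambda>q. bas (h q)) (comult_basis p) qq)"
    using assms(2) by simp
  also have "\<dots> = tensor_map (\<lambda>q. bas (h q)) (\<lambda>q. bas (h q)) (comult a)"
    using assms(1) by (simp add: tensor_map_comult)
  finally show ?thesis .
qed

lemma std_surj_comult:
  assumes "a \<in> WHA"
  shows "comult (std_surj a)
       = tensor_map (\<lambda>p. bas (std_surj_basis p)) (\<lambda>p. bas (std_surj_basis p)) (comult a)"
  using assms unfolding std_surj_def
  by (intro lin_bas_comult)
    (auto simp: WHA_def span_def dWHA_def WHA_basis_block_word comult_basis_std_surj_basis)

lemma std_surj_counit:
  assumes "a \<in> dWHA"
  shows "counit (std_surj a) = counit a"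
proof -
  have "counit (std_surj a) = (\<Sum>p\<in>supp a. if p = empty_sub then a p else 0)"
    unfolding counit_def std_surj_apply
  proof (rule sum.cong[OF refl])
    fix p assume "p \<in> supp a"
    then have "std_surj_basis p = empty_sub \<longleftrightarrow> p = empty_sub"
      using assms by (intro std_surj_basis_eq_empty_sub_iff) (auto simp: dWHA_def)
    then show "a p * bas (std_surj_basis p) empty_sub = (if p = empty_sub then a p else 0)"
      by (auto simp: bas_def)
  qed
  also have "\<dots> = counit a"
    using assms by (auto simp: counit_def supp_def dWHA_def)
  finally show ?thesis .
qed

section \<open>Antipodes\<close>

lemma restr_in_subst: "p \<in> subst \<Longrightarrow> set s \<subseteq> set (snd p) \<Longrightarrow> restr p s \<in> subst"
  unfolding restr_def by (rule canon_in_subst) (auto simp: subst_def)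

lemma block_word_fst_restr: "block_word (fst p) \<Longrightarrow> block_word (fst (restr p s))"
  unfolding restr_def canon_def fst_conv
  by (intro block_word_map block_word_filter inj_on_rename_idx)

lemma length_snd_restr: "length (snd (restr p s)) = length s"
  by (simp add: restr_def canon_def)

lemma cut_factors_in_subst:
  "p \<in> subst \<Longrightarrow> fst (cut_factors p i) \<in> subst \<and> snd (cut_factors p i) \<in> subst"
  unfolding cut_factors_def by (auto intro!: restr_in_subst dest: in_set_takeD in_set_dropD)

lemma cut_factors_length:
  assumes "p \<in> subst"
  shows "cut_factors p (length (snd p)) = (p, empty_sub)"
proof -
  have "restr p (snd p) = p"
    using assms by (simp add: restr_def subst_def)
  then show ?thesis
    by (simp add: cut_factors_def restr_def canon_def empty_sub_def)
qed

lemma length_in_good_cuts: "length (snd p) \<in> good_cuts p"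
  by (simp add: good_cuts_def good_cut_def)

lemma comult_bas: "comult (bas p) = comult_basis p"
  by (simp add: comult_def)

lemma supp_pure_tensor: "supp (\<lambda>qq. x (fst qq) * y (snd qq)) = supp x \<times> supp y"
  by (auto simp: supp_def)

lemma mult_tens_pure_tensor: "mult_tens (\<lambda>qq. x (fst qq) * y (snd qq)) = mult x y"
  by (simp add: mult_tens_def supp_pure_tensor mult_eq_sum_pairs)

lemma antipode_recursion:
  assumes s: "is_antipode s" and p: "p \<in> subst"
  shows "(\<Sum>i\<in>good_cuts p. mult (s (fst (cut_factors p i))) (bas (snd (cut_factors p i))) q)
       = counit (bas p) * unit q"
proof -
  have fin: "finite (supp (s u))" if "u \<in> subst" for u
    using s that by (auto simp: is_antipode_def dWHA_def)
  have factors: "fst pp \<in> subst" if "pp \<in> supp (comult_basis p)" for pp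
    using that supp_comult_basis[of p] cut_factors_in_subst[OF p] by blast
  have "mult_tens (tensor_map s bas (comult_basis p)) q
      = (\<Sum>pp\<in>supp (comult_basis p). comult_basis p pp *
          mult_tens (\<lambda>qq. s (fst pp) (fst qq) * bas (snd pp) (snd qq)) q)"
    unfolding mult_tens_def
    by (simp add: tensor_map_def case_prod_unfold mult.assoc sum_supp_linear_combination
        finite_supp_comult_basis supp_pure_tensor fin factors)
  also have "\<dots> = (\<Sum>i\<in>good_cuts p. mult (s (fst (cut_factors p i))) (bas (snd (cut_factors p i))) q)"
    by (simp add: mult_tens_pure_tensor sum_comult_basis)
  moreover have "mult_tens (tensor_map s bas (comult_basis p)) = (\<lambda>q. counit (bas p) * unit q)"
    using s p by (simp add: is_antipode_def comult_bas)
  ultimately show ?thesis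
    by simp
qed

lemma shuf_Nil_right [simp]: "shuf xs [] = [xs]"
  by (cases xs) auto

lemma mult_empty_sub_right:
  assumes "x \<in> dWHA"
  shows "mult x (bas empty_sub) = x"
proof
  fix q
  have "mult x (bas empty_sub) q = (\<Sum>u\<in>supp x. x u * mult_basis u empty_sub q)"
    by (simp add: mult_def)
  also have "\<dots> = (\<Sum>u\<in>supp x. if u = q then x u else 0)"
  proof (rule sum.cong[OF refl])
    fix u assume "u \<in> supp x"
    then have "canon u = u"
      using assms by (auto simp: dWHA_def subst_def)
    then show "x u * mult_basis u empty_sub q = (if u = q then x u else 0)"
      by (simp add: mult_basis_def empty_sub_def Let_def)
  qed
  also have "\<dots> = x q"
    using assms by (auto simp: supp_def dWHA_def)
  finally show "mult x (bas empty_sub) q = x q" .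
qed

lemma std_surj_bas: "std_surj (bas p) = bas (std_surj_basis p)"
  by (simp add: std_surj_def lin_bas_bas)

lemma std_surj_unit_multiple: "std_surj (\<lambda>q. c * unit q) = (\<lambda>q. c * unit q)"
proof (cases "c = 0")
  case False
  then have "supp (\<lambda>q. c * unit q) = {empty_sub}"
    by (auto simp: supp_def unit_def bas_def)
  then show ?thesis
    by (simp add: std_surj_apply fun_eq_iff unit_def)
qed (simp add: std_surj_apply supp_def fun_eq_iff)

lemma std_surj_antipode_recursion:
  assumes s: "is_antipode s" and p: "p \<in> subst"
  shows "(\<Sum>i\<in>good_cuts p. mult (std_surj (s (fst (cut_factors p i))))
            (bas (std_surj_basis (snd (cut_factors p i)))) r)
       = counit (bas p) * unit r"
proof -
  have in_dWHA: "s u \<in> dWHA" if "u \<in> subst" for u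
    using s that by (simp add: is_antipode_def)
  have "(\<Sum>i\<in>good_cuts p. mult (std_surj (s (fst (cut_factors p i))))
            (bas (std_surj_basis (snd (cut_factors p i)))) r)
      = (\<Sum>i\<in>good_cuts p.
          std_surj (mult (s (fst (cut_factors p i))) (bas (snd (cut_factors p i)))) r)"
    using cut_factors_in_subst[OF p] in_dWHA
    by (simp add: std_surj_mult std_surj_bas dWHA_def)
  also have "\<dots> = std_surj (\<lambda>q. \<Sum>i\<in>good_cuts p.
      mult (s (fst (cut_factors p i))) (bas (snd (cut_factors p i))) q) r"
    using cut_factors_in_subst[OF p] in_dWHA unfolding std_surj_def
    by (intro lin_bas_sum[symmetric]) (simp_all add: finite_good_cuts finite_supp_mult dWHA_def)
  also have "\<dots> = counit (bas p) * unit r"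
    by (simp add: antipode_recursion[OF s p] std_surj_unit_multiple)
  finally show ?thesis .
qed

lemma antipode_recursion_std_surj_basis:
  assumes s: "is_antipode s" and p: "p \<in> subst" "block_word (fst p)"
  shows "(\<Sum>i\<in>good_cuts p. mult (s (std_surj_basis (fst (cut_factors p i))))
            (bas (std_surj_basis (snd (cut_factors p i)))) r)
       = counit (bas p) * unit r"
proof -
  have "counit (bas (std_surj_basis p)) = counit (bas p)"
    using std_surj_basis_eq_empty_sub_iff[OF p(1)] by (auto simp: counit_def bas_def)
  then show ?thesis
    using antipode_recursion[OF s std_surj_basis_in_subst[OF p(1)], of r] p
    by (simp add: cut_factors_std_surj_basis good_cuts_std_surj_basis)
qed

text \<open>The recursions for \<open>std_surj (S p)\<close> and for \<open>S (std_surj_basis p)\<close> run over the same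
  cuts.  By induction all their terms agree except the one for the cut after the whole bottom
  word, whose right factor is the unit; so that one agrees as well.\<close>
lemma std_surj_antipode_basis:
  assumes s: "is_antipode s"
  shows "p \<in> subst \<Longrightarrow> block_word (fst p) \<Longrightarrow> std_surj (s p) = s (std_surj_basis p)"
proof (induct "length (snd p)" arbitrary: p rule: less_induct)
  case less
  define n where "n = length (snd p)"
  let ?a = "\<lambda>i. fst (cut_factors p i)" and ?c = "\<lambda>i. snd (cut_factors p i)"
  have below_n: "std_surj (s (?a i)) = s (std_surj_basis (?a i))" if "i \<in> good_cuts p - {n}" for i
  proof (rule less.hyps)
    have "i < n"
      using that by (auto simp: good_cuts_def good_cut_def n_def)
    then show "length (snd (?a i)) < length (snd p)"
      by (simp add: cut_factors_def length_snd_restr n_def)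
    show "?a i \<in> subst" "block_word (fst (?a i))"
      using less.prems cut_factors_in_subst
      by (simp_all add: cut_factors_def block_word_fst_restr)
  qed
  have at_n: "?a n = p" "?c n = empty_sub"
    using cut_factors_length[OF less.prems(1)] by (simp_all add: n_def)
  show ?case
  proof
    fix r
    define D where "D i = mult (std_surj (s (?a i))) (bas (std_surj_basis (?c i))) r
        - mult (s (std_surj_basis (?a i))) (bas (std_surj_basis (?c i))) r" for i
    have "(\<Sum>i\<in>good_cuts p. D i) = 0"
      using std_surj_antipode_recursion[OF s less.prems(1)]
        antipode_recursion_std_surj_basis[OF s less.prems]
      by (simp add: D_def sum_subtractf)
    moreover have "(\<Sum>i\<in>good_cuts p. D i) = D n"
      using finite_good_cuts length_in_good_cuts below_n
      by (simp add: sum.remove[of _ n] D_def n_def)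
    ultimately have
      "mult (std_surj (s p)) (bas empty_sub) r = mult (s (std_surj_basis p)) (bas empty_sub) r"
      by (simp add: D_def at_n)
    moreover have "s p \<in> dWHA" "s (std_surj_basis p) \<in> dWHA"
      using s less.prems std_surj_basis_in_subst by (simp_all add: is_antipode_def)
    ultimately show "std_surj (s p) r = s (std_surj_basis p) r"
      by (simp add: mult_empty_sub_right std_surj_in_dWHA)
  qed
qed

lemma lin_bas_lin:
  assumes "finite (supp a)" "\<And>p. p \<in> supp a \<Longrightarrow> finite (supp (s p))"
    and "\<And>p. p \<in> supp a \<Longrightarrow> lin (\<lambda>q. bas (h q)) (s p) = s (h p)"
  shows "lin (\<lambda>q. bas (h q)) (lin s a) = lin s (lin (\<lambda>q. bas (h q)) a)"
proof
  fix r
  have "lin (\<lambda>q. bas (h q)) (lin s a) r = (\<Sum>p\<in>supp a. a p * lin (\<lambda>q. bas (h q)) (s p) r)"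
    unfolding lin_def[of s] lin_bas_apply
    by (rule sum_supp_linear_combination) (use assms in auto)
  also have "\<dots> = (\<Sum>p\<in>supp a. a p * s (h p) r)"
    using assms(3) by simp
  also have "\<dots> = lin s (lin (\<lambda>q. bas (h q)) a) r"
    using sum_supp_lin_bas[OF assms(1), of h "\<lambda>u. s u r"] by (simp add: lin_def)
  finally show "lin (\<lambda>q. bas (h q)) (lin s a) r = lin s (lin (\<lambda>q. bas (h q)) a) r" .
qed

lemma std_surj_antipode:
  assumes s: "is_antipode s" and a: "a \<in> WHA"
  shows "std_surj (lin s a) = lin s (std_surj a)"
proof -
  have "finite (supp a)" and "\<And>p. p \<in> supp a \<Longrightarrow> p \<in> subst \<and> block_word (fst p)"
    using a by (auto simp: WHA_def span_def dWHA_def WHA_basis_block_word)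
  moreover have "\<And>p. p \<in> subst \<Longrightarrow> finite (supp (s p))"
    using s by (auto simp: is_antipode_def dWHA_def)
  ultimately show ?thesis
    unfolding std_surj_def
    using std_surj_antipode_basis[OF s, unfolded std_surj_def] by (intro lin_bas_lin) auto
qed

lemma WHA_subset_dWHA: "WHA \<subseteq> dWHA"
  by (auto simp: WHA_def span_def)

lemma std_surj_id_on_WHA_surj:
  assumes "a \<in> WHA_surj"
  shows "std_surj a = a"
proof -
  have "std_surj a = lin bas a"
    using assms unfolding std_surj_def lin_def
    by (intro ext sum.cong) (auto simp: WHA_surj_def span_def WHA_basis_def std_surj_basis_id)
  also have "\<dots> = a"
    using assms by (simp add: lin_bas_id WHA_surj_def span_def dWHA_def)
  finally show ?thesis .
qed

lemma WHA_inj_Int_WHA_surj: "WHA_inj \<inter> WHA_surj = phi_MPR"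
proof -
  have "{p \<in> WHA_basis. distinct (snd p)} \<inter> {p \<in> WHA_basis. distinct (fst p)}
      = {p \<in> subst. distinct (fst p) \<and> distinct (snd p)}"
    by (auto simp: WHA_basis_block_word block_word_if_distinct)
  then show ?thesis
    unfolding WHA_inj_def WHA_surj_def phi_MPR_def span_def by blast
qed

lemma std_surj_basis_in_WHA_surj_basis:
  assumes "p \<in> WHA_basis"
  shows "std_surj_basis p \<in> {p \<in> WHA_basis. distinct (fst p)}"
  using assms std_surj_basis_in_subst distinct_fst_std_surj_basis block_word_if_distinct
  by (simp add: WHA_basis_block_word)

lemma std_surj_WHA: "a \<in> WHA \<Longrightarrow> std_surj a \<in> WHA_surj"
  using supp_std_surj[of a] std_surj_in_dWHA std_surj_basis_in_WHA_surj_basis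
  unfolding WHA_def WHA_surj_def span_def by blast

lemma std_surj_WHA_inj: "std_surj ` WHA_inj = WHA_inj \<inter> WHA_surj"
proof
  show "std_surj ` WHA_inj \<subseteq> WHA_inj \<inter> WHA_surj"
  proof
    fix b assume "b \<in> std_surj ` WHA_inj"
    then obtain a where a: "a \<in> WHA_inj" and b: "b = std_surj a" by blast
    have "std_surj_basis p \<in> {p \<in> WHA_basis. distinct (snd p)}" if "p \<in> supp a" for p
    proof -
      have "p \<in> WHA_basis" "distinct (snd p)"
        using a that by (auto simp: WHA_inj_def span_def)
      then show ?thesis
        using std_surj_basis_in_WHA_surj_basis distinct_snd_std_surj_basis
        by (simp add: WHA_basis_def)
    qed
    moreover have "a \<in> WHA"
      using a by (auto simp: WHA_inj_def WHA_def span_def)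
    ultimately show "b \<in> WHA_inj \<inter> WHA_surj"
      using b supp_std_surj[of a] std_surj_WHA std_surj_in_dWHA WHA_subset_dWHA
      unfolding WHA_inj_def span_def by blast
  qed
  show "WHA_inj \<inter> WHA_surj \<subseteq> std_surj ` WHA_inj"
    using std_surj_id_on_WHA_surj by (metis IntD1 IntD2 image_eqI subsetI)
qed

theorem proposition10p3:
  shows "std_surj ` WHA \<subseteq> WHA_surj
    \<and> (\<forall>a\<in>WHA. \<forall>b\<in>WHA. std_surj (mult a b) = mult (std_surj a) (std_surj b))
    \<and> std_surj unit = unit
    \<and> (\<forall>a\<in>WHA. comult (std_surj a)
          = tensor_map (\<lambda>p. bas (std_surj_basis p)) (\<lambda>p. bas (std_surj_basis p)) (comult a))
    \<and> (\<forall>a\<in>WHA. counit (std_surj a) = counit a)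
    \<and> (\<forall>s. is_antipode s \<longrightarrow> (\<forall>a\<in>WHA. std_surj (lin s a) = lin s (std_surj a)))
    \<and> (\<forall>a\<in>WHA_surj. std_surj a = a)
    \<and> WHA_inj \<inter> WHA_surj = phi_MPR
    \<and> std_surj ` WHA_inj = WHA_inj \<inter> WHA_surj
    \<and> std_surj ` WHA_inj \<subseteq> phi_MPR
    \<and> (\<forall>a\<in>phi_MPR. std_surj a = a)"
proof (intro conjI ballI allI impI)
  show "std_surj ` WHA \<subseteq> WHA_surj"
    using std_surj_WHA by blast
  show "std_surj (mult a b) = mult (std_surj a) (std_surj b)" if "a \<in> WHA" "b \<in> WHA" for a b
    using that WHA_subset_dWHA by (blast intro: std_surj_mult)
  show "std_surj unit = unit"
    by (simp add: unit_def std_surj_bas)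
  show "comult (std_surj a)
      = tensor_map (\<lambda>p. bas (std_surj_basis p)) (\<lambda>p. bas (std_surj_basis p)) (comult a)"
    if "a \<in> WHA" for a
    using that by (rule std_surj_comult)
  show "counit (std_surj a) = counit a" if "a \<in> WHA" for a
    using that WHA_subset_dWHA by (blast intro: std_surj_counit)
  show "std_surj (lin s a) = lin s (std_surj a)" if "is_antipode s" "a \<in> WHA" for s a
    using that by (rule std_surj_antipode)
  show "std_surj a = a" if "a \<in> WHA_surj" for a
    using that by (rule std_surj_id_on_WHA_surj)
  show "WHA_inj \<inter> WHA_surj = phi_MPR"
    by (rule WHA_inj_Int_WHA_surj)
  show "std_surj ` WHA_inj = WHA_inj \<inter> WHA_surj"
    by (rule std_surj_WHA_inj)
  show "std_surj ` WHA_inj \<subseteq> phi_MPR"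
    using std_surj_WHA_inj WHA_inj_Int_WHA_surj by simp
  show "std_surj a = a" if "a \<in> phi_MPR" for a
    using that WHA_inj_Int_WHA_surj std_surj_id_on_WHA_surj by blast
qed

end
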